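(* Let $\mathcal F$ be a sheaf of finite-dimensional $\mathbb F$-vector spaces on a digraph $G$ and $\pi\colon G[\mathbb Z]\to G$ the universal Abelian covering. Then $h_1^{\rm twist}(\mathcal F)\neq0$ if and only if $H_1^\oplus(\pi^*\mathcal F)\neq0$. Moreover, if so, there is a nonzero $w\in H_1^\oplus(\pi^*\mathcal F)$ supported on edges of $G[\mathbb Z_{\ge0}]$, i.e. on edges $(e,n)$ with $n\in\mathbb Z_{\ge0}^{E_G}$.
   Context: A digraph $G$ has finite sets $V_G,E_G$ and tail/head maps $t_G,h_G$. A sheaf $\mathcal F$: finite-dimensional vector spaces $\mathcal F(P)$, $P\in V_G\sqcup E_G$, linear maps $\mathcal F(t,e)\colon\mathcal F(e)\to\mathcal F(t_Ge)$, $\mathcal F(h,e)\colon\mathcal F(e)\to\mathcal F(h_Ge)$; the same definition is used for sheaves on locally finite infinite digraphs. Twisting: with independent indeterminates $\psi(e)$, $e\in E_G$, $\mathcal F^\psi$ has values $\mathcal F(P)\otimes\mathbb F(\psi)$, head maps $\mathcal F(h,e)$, tail maps $\psi(e)\mathcal F(t,e)$; $h_1^{\rm twist}(\mathcal F)$ is the $\mathbb F(\psi)$-dimension of $\ker(d_h-d_t)$ on $\bigoplus_e\mathcal F^\psi(e)\to\bigoplus_v\mathcal F^\psi(v)$, where $d_h$ (resp. $d_t$) sends the summand of $e$ to that of $h_Ge$ (resp. $t_Ge$) via the head (resp. tail) map. The universal Abelian covering $G[\mathbb Z]$ has $V=V_G\times\mathbb Z^{E_G}$, $E=E_G\times\mathbb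 Z^{E_G}$, head $(e,n)\mapsto(h_Ge,n)$, tail $(e,n)\mapsto(t_Ge,n+\delta_e)$ with $\delta_e$ the indicator of $e$; $\pi$ is projection to the first coordinate, and $G[\mathbb Z_{\ge0}]$ is the subgraph with $n\in\mathbb Z_{\ge0}^{E_G}$. The pullback $\pi^*\mathcal F$ has values $\mathcal F(\pi(P))$ and restriction maps $\mathcal F(h,\pi(e)),\mathcal F(t,\pi(e))$. For a sheaf $\mathcal H$ on a locally finite infinite digraph, $H_1^\oplus(\mathcal H)$ is the kernel of $d=d_h-d_t\colon\bigoplus_e\mathcal H(e)\to\bigoplus_v\mathcal H(v)$ (finitely supported elements). *)

theory Defs
  imports Main HOL.Vector_Spaces "HOL-Library.Poly_Mapping" "HOL-Library.Function_Algebras"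
    "HOL-Computational_Algebra.Fraction_Field"
begin

text \<open>A sheaf of finite-dimensional vector spaces over a field is given by dimensions
  dV v, dE e (the stalks are K^(dV v), K^(dE e)) and matrices Rt e, Rh e
  (entry in row i, column j), where Rt e : K^(dE e) -> K^(dV (tlG e)) and
  Rh e : K^(dE e) -> K^(dV (hdG e)); only entries i < dV(..), j < dE e matter.
  Edge chains (elements of the direct sum over edges of the stalks) are functions
  x e j, vanishing for e outside E or j >= dE e.\<close>

definition edge_chains :: "'e set \<Rightarrow> ('e \<Rightarrow> nat) \<Rightarrow> ('e \<Rightarrow> nat \<Rightarrow> 'k::zero) set" where
  "edge_chains E dE = {x. \<forall>e j. (e \<notin> E \<or> dE e \<le> j) \<longrightarrow> x e j = 0}"

definition is_cycle ::
  "'v set \<Rightarrow> 'e set \<Rightarrow> ('e \<Rightarrow> 'v) \<Rightarrow> ('e \<Rightarrow> 'v) \<Rightarrow> ('v \<Rightarrow> nat) \<Rightarrow> ('e \<Rightarrow> nat)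
    \<Rightarrow> ('e \<Rightarrow> nat \<Rightarrow> nat \<Rightarrow> 'k::comm_ring) \<Rightarrow> ('e \<Rightarrow> nat \<Rightarrow> nat \<Rightarrow> 'k)
    \<Rightarrow> ('e \<Rightarrow> nat \<Rightarrow> 'k) \<Rightarrow> bool" where
  "is_cycle V E tlG hdG dV dE Rt Rh x \<longleftrightarrow>
     (\<forall>v\<in>V. \<forall>i < dV v.
        (\<Sum>e\<in>{e\<in>E. hdG e = v}. \<Sum>j<dE e. Rh e i j * x e j)
      - (\<Sum>e\<in>{e\<in>E. tlG e = v}. \<Sum>j<dE e. Rt e i j * x e j) = 0)"

definition ker_d where
  "ker_d V E tlG hdG dV dE Rt Rh = {x \<in> edge_chains E dE. is_cycle V E tlG hdG dV dE Rt Rh x}"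

definition H1_oplus where
  "H1_oplus V E tlG hdG dV dE Rt Rh =
     {x \<in> ker_d V E tlG hdG dV dE Rt Rh. finite {e \<in> E. \<exists>j. x e j \<noteq> 0}}"

text \<open>Rational function field F(psi): fraction field of the polynomial ring
  over F in the indeterminates psi(e).\<close>
type_synonym ('e, 'a) ratfun = "(('e \<Rightarrow>\<^sub>0 nat) \<Rightarrow>\<^sub>0 'a) fract"

definition const_rf :: "'a::field \<Rightarrow> ('e::linorder, 'a) ratfun" where
  "const_rf c = Fract (Poly_Mapping.single 0 c) 1"

definition psi :: "'e::linorder \<Rightarrow> ('e, 'a::field) ratfun" where
  "psi e = Fract (Poly_Mapping.single (Poly_Mapping.single e 1) 1) 1"

definition h1_twist ::
  "'v set \<Rightarrow> 'e::linorder set \<Rightarrow> ('e \<Rightarrow> 'v) \<Rightarrow> ('e \<Rightarrow> 'v) \<Rightarrow> ('v \<Rightarrow> nat) \<Rightarrow> ('e \<Rightarrow> nat)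
    \<Rightarrow> ('e \<Rightarrow> nat \<Rightarrow> nat \<Rightarrow> 'a::field) \<Rightarrow> ('e \<Rightarrow> nat \<Rightarrow> nat \<Rightarrow> 'a) \<Rightarrow> nat" where
  "h1_twist V E tlG hdG dV dE Rt Rh =
     vector_space.dim (\<lambda>(c::('e,'a) ratfun) x. (\<lambda>e j. c * x e j))
       (ker_d V E tlG hdG dV dE
          (\<lambda>e i j. psi e * const_rf (Rt e i j)) (\<lambda>e i j. const_rf (Rh e i j)))"

text \<open>Universal Abelian covering G[Z]: Z^{E_G} is represented by integer
  functions on the edge type vanishing outside E.\<close>
definition ZE :: "'e set \<Rightarrow> ('e \<Rightarrow> int) set" where
  "ZE E = {n. \<forall>e. e \<notin> E \<longrightarrow> n e = 0}"

definition delta :: "'e \<Rightarrow> 'e \<Rightarrow> int" where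
  "delta e = (\<lambda>e'. if e' = e then 1 else 0)"

definition cov_V :: "'v set \<Rightarrow> 'e set \<Rightarrow> ('v \<times> ('e \<Rightarrow> int)) set" where
  "cov_V V E = V \<times> ZE E"
definition cov_E :: "'e set \<Rightarrow> ('e \<times> ('e \<Rightarrow> int)) set" where
  "cov_E E = E \<times> ZE E"
definition cov_hd :: "('e \<Rightarrow> 'v) \<Rightarrow> 'e \<times> ('e \<Rightarrow> int) \<Rightarrow> 'v \<times> ('e \<Rightarrow> int)" where
  "cov_hd hdG = (\<lambda>(e, n). (hdG e, n))"
definition cov_tl :: "('e \<Rightarrow> 'v) \<Rightarrow> 'e \<times> ('e \<Rightarrow> int) \<Rightarrow> 'v \<times> ('e \<Rightarrow> int)" where
  "cov_tl tlG = (\<lambda>(e, n). (tlG e, n + delta e))"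

text \<open>H_1^oplus of the pullback pi^* F to G[Z] (pi = fst).\<close>
definition H1_oplus_pullback where
  "H1_oplus_pullback V E tlG hdG dV dE Rt Rh =
     H1_oplus (cov_V V E) (cov_E E) (cov_tl tlG) (cov_hd hdG)
       (\<lambda>p. dV (fst p)) (\<lambda>p. dE (fst p)) (\<lambda>p. Rt (fst p)) (\<lambda>p. Rh (fst p))"

end

theory Submission
  imports Defs
begin

(* Clearing denominators identifies nonzero twisted cycles over the rational function
   field F(psi) with nonzero cycles of the polynomial model over F[psi], in which the
   tail map of an edge e is multiplied by the variable psi(e); since all chains live in
   a finite-dimensional space, h_1^twist is nonzero exactly when such cycles exist.
   A polynomial chain y is then compared with chains on the cover through its slices:
   for a monomial B in variables outside E, the slice of y at B records at the lift
   (e, n) of e, n >= 0, the coefficient of B psi^n in y.  Multiplication by psi(e)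
   corresponds to the step n -> n - delta e, so y is a cycle iff all its slices are
   cycles on the cover.  Conversely, a finitely supported cycle on the cover can be
   translated by a deck transformation into the positive orthant and is then a slice
   of its generating function.  Both directions of the theorem follow, and the slices
   provide the cycle supported in G[Z_{>=0}]. *)

definition boundary ::
  "'e set \<Rightarrow> ('e \<Rightarrow> 'v) \<Rightarrow> ('e \<Rightarrow> 'v) \<Rightarrow> ('e \<Rightarrow> nat)
    \<Rightarrow> ('e \<Rightarrow> nat \<Rightarrow> nat \<Rightarrow> 'k::comm_ring) \<Rightarrow> ('e \<Rightarrow> nat \<Rightarrow> nat \<Rightarrow> 'k)
    \<Rightarrow> ('e \<Rightarrow> nat \<Rightarrow> 'k) \<Rightarrow> 'v \<Rightarrow> nat \<Rightarrow> 'k" where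
  "boundary E tlG hdG dE Rt Rh x v i =
     (\<Sum>e\<in>{e\<in>E. hdG e = v}. \<Sum>j<dE e. Rh e i j * x e j)
   - (\<Sum>e\<in>{e\<in>E. tlG e = v}. \<Sum>j<dE e. Rt e i j * x e j)"

lemma is_cycle_iff_boundary:
  "is_cycle V E tlG hdG dV dE Rt Rh x \<longleftrightarrow>
     (\<forall>v\<in>V. \<forall>i<dV v. boundary E tlG hdG dE Rt Rh x v i = 0)"
  by (simp add: is_cycle_def boundary_def)

lemma boundary_scale:
  "boundary E tlG hdG dE Rt Rh (\<lambda>e j. c * x e j) v i = c * boundary E tlG hdG dE Rt Rh x v i"
  by (simp add: boundary_def right_diff_distrib sum_distrib_left mult.left_commute)

lemma is_cycle_scale:
  assumes "is_cycle V E tlG hdG dV dE Rt Rh x"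
  shows "is_cycle V E tlG hdG dV dE Rt Rh (\<lambda>e j. c * x e j)"
  using assms by (simp add: is_cycle_iff_boundary boundary_scale)

lemma is_cycle_ring_hom:
  fixes \<phi> :: "'k::comm_ring \<Rightarrow> 'l::comm_ring"
  assumes add: "\<And>a b. \<phi> (a + b) = \<phi> a + \<phi> b"
    and mult: "\<And>a b. \<phi> (a * b) = \<phi> a * \<phi> b"
    and inj: "inj \<phi>"
  shows "is_cycle V E tlG hdG dV dE (\<lambda>e i j. \<phi> (Rt e i j)) (\<lambda>e i j. \<phi> (Rh e i j))
           (\<lambda>e j. \<phi> (x e j)) \<longleftrightarrow> is_cycle V E tlG hdG dV dE Rt Rh x"
proof -
  have zero: "\<phi> 0 = 0"
    using add[of 0 0] by simp
  have diff: "\<phi> (a - b) = \<phi> a - \<phi> b" for a b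
    using add[of "a - b" b] by (simp add: algebra_simps)
  note sum = sum_comp_morphism[of \<phi>, OF zero add, unfolded comp_def, symmetric]
  have "\<phi> (boundary E tlG hdG dE Rt Rh x v i) =
     boundary E tlG hdG dE (\<lambda>e i j. \<phi> (Rt e i j)) (\<lambda>e i j. \<phi> (Rh e i j)) (\<lambda>e j. \<phi> (x e j)) v i"
    for v i by (simp add: boundary_def diff sum mult)
  moreover have "\<phi> a = 0 \<longleftrightarrow> a = 0" for a
    using inj zero by (metis injD)
  ultimately have "boundary E tlG hdG dE (\<lambda>e i j. \<phi> (Rt e i j)) (\<lambda>e i j. \<phi> (Rh e i j))
        (\<lambda>e j. \<phi> (x e j)) v i = 0 \<longleftrightarrow> boundary E tlG hdG dE Rt Rh x v i = 0" for v i
    by metis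
  then show ?thesis
    by (simp add: is_cycle_iff_boundary)
qed

abbreviation chain_scale :: "'k::field \<Rightarrow> ('e \<Rightarrow> nat \<Rightarrow> 'k) \<Rightarrow> 'e \<Rightarrow> nat \<Rightarrow> 'k" where
  "chain_scale \<equiv> (\<lambda>c x e j. c * x e j)"

lemma vector_space_chain_scale: "vector_space chain_scale"
  by unfold_locales (auto simp: fun_eq_iff algebra_simps)

lemma (in vector_space) dim_eq_0_if_finite_span:
  assumes "finite B" and "S \<subseteq> span B"
  shows "dim S = 0 \<longleftrightarrow> S \<subseteq> {0}"
proof -
  obtain C where C: "C \<subseteq> S" "independent C" "S \<subseteq> span C" "card C = dim S"
    by (rule basis_exists)
  have "finite C"
    using independent_span_bound[OF assms(1) C(2)] C(1) assms(2) by auto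
  moreover have "0 \<notin> C"
    using C(2) dependent_zero by blast
  ultimately have "dim S = 0 \<longleftrightarrow> C = {}"
    using C(4) by auto
  also have "\<dots> \<longleftrightarrow> S \<subseteq> {0}"
  proof
    assume "C = {}"
    then show "S \<subseteq> {0}"
      using C(3) by simp
  next
    assume "S \<subseteq> {0}"
    then show "C = {}"
      using C(1) \<open>0 \<notin> C\<close> by blast
  qed
  finally show ?thesis .
qed

definition unit_chain :: "'e \<times> nat \<Rightarrow> 'e \<Rightarrow> nat \<Rightarrow> 'k::field" where
  "unit_chain p = (\<lambda>e j. if (e, j) = p then 1 else 0)"

lemma sum_chain_apply: "(\<Sum>p\<in>I. f p) e j = (\<Sum>p\<in>I. f p e j)"
  by (induction I rule: infinite_finite_induct) auto

lemma edge_chains_in_span: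
  assumes "finite E"
  shows "(edge_chains E dE :: ('e \<Rightarrow> nat \<Rightarrow> 'k::field) set) \<subseteq>
           module.span chain_scale (unit_chain ` Sigma E (\<lambda>e. {..<dE e}))"
proof
  interpret vs: vector_space "chain_scale :: 'k \<Rightarrow> _" by (rule vector_space_chain_scale)
  define I where "I = Sigma E (\<lambda>e. {..<dE e})"
  have "finite I"
    using assms by (simp add: I_def)
  fix z :: "'e \<Rightarrow> nat \<Rightarrow> 'k" assume z: "z \<in> edge_chains E dE"
  have "z = (\<Sum>p\<in>I. chain_scale (z (fst p) (snd p)) (unit_chain p))"
  proof (intro ext)
    fix e j
    have "(\<Sum>p\<in>I. chain_scale (z (fst p) (snd p)) (unit_chain p)) e j
        = (\<Sum>p\<in>I. if p = (e, j) then z e j else 0)"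
      by (auto simp: sum_chain_apply unit_chain_def intro: sum.cong)
    also have "\<dots> = z e j"
      using z \<open>finite I\<close> by (auto simp: sum.delta I_def edge_chains_def)
    finally show "z e j = (\<Sum>p\<in>I. chain_scale (z (fst p) (snd p)) (unit_chain p)) e j" ..
  qed
  also have "\<dots> \<in> vs.span (unit_chain ` I)"
    by (intro vs.span_sum) (auto intro: vs.span_scale vs.span_base)
  finally show "z \<in> vs.span (unit_chain ` Sigma E (\<lambda>e. {..<dE e}))"
    by (simp add: I_def)
qed

lemma dim_chains_eq_0_iff:
  assumes "finite E" and "S \<subseteq> edge_chains E dE"
  shows "vector_space.dim (chain_scale :: 'k::field \<Rightarrow> _) S = 0 \<longleftrightarrow> S \<subseteq> {0}"
proof -
  interpret vs: vector_space "chain_scale :: 'k \<Rightarrow> _" by (rule vector_space_chain_scale)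
  have "S \<subseteq> vs.span (unit_chain ` Sigma E (\<lambda>e. {..<dE e}))"
    using edge_chains_in_span[OF assms(1)] assms(2) by blast
  then show ?thesis
    using assms(1) by (intro vs.dim_eq_0_if_finite_span) auto
qed

section \<open>Polynomials inside the field of rational functions\<close>

abbreviation lookup :: "('b \<Rightarrow>\<^sub>0 'c::zero) \<Rightarrow> 'b \<Rightarrow> 'c" where
  "lookup \<equiv> Poly_Mapping.lookup"

abbreviation keys :: "('b \<Rightarrow>\<^sub>0 'c::zero) \<Rightarrow> 'b set" where
  "keys \<equiv> Poly_Mapping.keys"

abbreviation single :: "'b \<Rightarrow> 'c::zero \<Rightarrow> 'b \<Rightarrow>\<^sub>0 'c" where
  "single \<equiv> Poly_Mapping.single"

definition fract_of :: "'a::idom \<Rightarrow> 'a fract" where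
  "fract_of a = Fract a 1"

lemma fract_of_add: "fract_of (a + b) = fract_of a + fract_of b"
  by (simp add: fract_of_def)

lemma fract_of_mult: "fract_of (a * b) = fract_of a * fract_of b"
  by (simp add: fract_of_def)

lemma inj_fract_of: "inj fract_of"
  by (rule injI) (simp add: fract_of_def eq_fract)

lemma fract_of_eq_0_iff [simp]: "fract_of a = 0 \<longleftrightarrow> a = 0"
  by (simp add: fract_of_def Zero_fract_def eq_fract)

lemma common_denominator:
  fixes x :: "'i \<Rightarrow> 'a::idom fract"
  assumes "finite I"
  obtains D y where "D \<noteq> 0" and "\<And>p. p \<in> I \<Longrightarrow> fract_of (y p) = fract_of D * x p"
proof -
  have "\<forall>p. \<exists>a b. b \<noteq> 0 \<and> x p = Fract a b"
    by (metis Fract_cases)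
  then obtain A B where AB: "\<And>p. B p \<noteq> 0" "\<And>p. x p = Fract (A p) (B p)"
    by metis
  define D where "D = (\<Prod>p\<in>I. B p)"
  have "fract_of (A p * (\<Prod>q\<in>I - {p}. B q)) = fract_of D * x p" if "p \<in> I" for p
  proof -
    have "D = B p * (\<Prod>q\<in>I - {p}. B q)"
      unfolding D_def using prod.remove[OF assms that] .
    then show ?thesis
      using AB by (simp add: fract_of_def eq_fract algebra_simps)
  qed
  moreover have "D \<noteq> 0"
    using AB(1) assms by (simp add: D_def)
  ultimately show ?thesis
    by (rule that[rotated])
qed

lemma lookup_monomial_mult:
  fixes p :: "('e \<Rightarrow>\<^sub>0 nat) \<Rightarrow>\<^sub>0 'a::comm_semiring_1"
  shows "lookup (single a c * p) M =
     (if \<forall>k. lookup a k \<le> lookup M k then c * lookup p (M - a) else 0)"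
proof -
  have "lookup (single a c * p) M = c * (\<Sum>q. lookup p q when M = a + q)"
    by (simp add: lookup_mult lookup_single when_mult Sum_any_right_distrib[symmetric])
  also have "(\<lambda>q. lookup p q when M = a + q) =
      (\<lambda>q. (lookup p q when (\<forall>k. lookup a k \<le> lookup M k)) when q = M - a)"
  proof
    fix q
    have "M = a + q \<longleftrightarrow> (\<forall>k. lookup a k \<le> lookup M k) \<and> q = M - a"
      by (auto simp: poly_mapping_eq_iff fun_eq_iff lookup_add lookup_minus)
    then show "(lookup p q when M = a + q) =
        ((lookup p q when (\<forall>k. lookup a k \<le> lookup M k)) when q = M - a)"
      by (auto simp: when_def)
  qed
  finally show ?thesis
    by (simp add: when_def)
qed

locale digraph_sheaf =
  fixes V :: "'v set" and E :: "'e::linorder set" and tlG hdG :: "'e \<Rightarrow> 'v"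
    and dV :: "'v \<Rightarrow> nat" and dE :: "'e \<Rightarrow> nat"
    and Rt Rh :: "'e \<Rightarrow> nat \<Rightarrow> nat \<Rightarrow> 'a::field"
  assumes finite_E: "finite E"
begin

definition ker_twist :: "('e \<Rightarrow> nat \<Rightarrow> ('e, 'a) ratfun) set" where
  "ker_twist = ker_d V E tlG hdG dV dE
     (\<lambda>e i j. psi e * const_rf (Rt e i j)) (\<lambda>e i j. const_rf (Rh e i j))"

definition poly_Rt :: "'e \<Rightarrow> nat \<Rightarrow> nat \<Rightarrow> ('e \<Rightarrow>\<^sub>0 nat) \<Rightarrow>\<^sub>0 'a" where
  "poly_Rt e i j = single (single e 1) (Rt e i j)"

definition poly_Rh :: "'e \<Rightarrow> nat \<Rightarrow> nat \<Rightarrow> ('e \<Rightarrow>\<^sub>0 nat) \<Rightarrow>\<^sub>0 'a" where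
  "poly_Rh e i j = single 0 (Rh e i j)"

definition ker_poly :: "('e \<Rightarrow> nat \<Rightarrow> ('e \<Rightarrow>\<^sub>0 nat) \<Rightarrow>\<^sub>0 'a) set" where
  "ker_poly = ker_d V E tlG hdG dV dE poly_Rt poly_Rh"

lemma ker_twist_fract_of:
  "ker_twist = ker_d V E tlG hdG dV dE
     (\<lambda>e i j. fract_of (poly_Rt e i j)) (\<lambda>e i j. fract_of (poly_Rh e i j))"
  by (simp add: ker_twist_def poly_Rt_def poly_Rh_def psi_def const_rf_def fract_of_def mult_single)

lemma is_cycle_fract_of_iff:
  "is_cycle V E tlG hdG dV dE (\<lambda>e i j. fract_of (poly_Rt e i j)) (\<lambda>e i j. fract_of (poly_Rh e i j))
      (\<lambda>e j. fract_of (y e j)) \<longleftrightarrow> is_cycle V E tlG hdG dV dE poly_Rt poly_Rh y"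
  by (rule is_cycle_ring_hom[OF fract_of_add fract_of_mult inj_fract_of])

lemma fract_of_ker_poly:
  assumes "y \<in> ker_poly"
  shows "(\<lambda>e j. fract_of (y e j)) \<in> ker_twist"
  using assms
  by (auto simp: ker_poly_def ker_twist_fract_of ker_d_def edge_chains_def is_cycle_fract_of_iff)

text \<open>Clearing denominators turns a twisted cycle into a polynomial one.\<close>
lemma ker_poly_of_ker_twist:
  assumes x: "x \<in> ker_twist" and "x \<noteq> 0"
  shows "\<exists>y\<in>ker_poly. y \<noteq> 0"
proof -
  define I where "I = Sigma E (\<lambda>e. {..<dE e})"
  have "finite I"
    using finite_E by (simp add: I_def)
  then obtain D y0 where D: "D \<noteq> 0"
    and y0: "\<And>p. p \<in> I \<Longrightarrow> fract_of (y0 p) = fract_of D * x (fst p) (snd p)"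
    using common_denominator[of I "\<lambda>p. x (fst p) (snd p)"] by blast
  define y where "y e j = (if (e, j) \<in> I then y0 (e, j) else 0)" for e j
  have x_chain: "x e j = 0" if "(e, j) \<notin> I" for e j
    using x that by (auto simp: ker_twist_def ker_d_def edge_chains_def I_def)
  have scaled: "(\<lambda>e j. fract_of (y e j)) = (\<lambda>e j. fract_of D * x e j)"
    using y0 x_chain by (auto simp: y_def fract_of_def Zero_fract_def intro!: ext)
  have "(\<lambda>e j. fract_of D * x e j) \<in> ker_twist"
    using x by (auto simp: ker_twist_def ker_d_def edge_chains_def intro: is_cycle_scale)
  then have "is_cycle V E tlG hdG dV dE poly_Rt poly_Rh y"
    unfolding scaled[symmetric] ker_twist_fract_of ker_d_def is_cycle_fract_of_iff[symmetric]
    by simp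
  moreover have "y \<in> edge_chains E dE"
    by (auto simp: y_def I_def edge_chains_def)
  moreover have "y \<noteq> 0"
  proof -
    obtain e j where "x e j \<noteq> 0"
      using \<open>x \<noteq> 0\<close> by (auto simp: fun_eq_iff)
    moreover have "fract_of (y e j) = fract_of D * x e j"
      using fun_cong[OF fun_cong[OF scaled, of e], of j] by simp
    ultimately have "fract_of (y e j) \<noteq> 0"
      using D by simp
    then show ?thesis
      by (auto simp: fun_eq_iff)
  qed
  ultimately show ?thesis
    by (auto simp: ker_poly_def ker_d_def)
qed

lemma h1_twist_ne_0_iff:
  "h1_twist V E tlG hdG dV dE Rt Rh \<noteq> 0 \<longleftrightarrow> (\<exists>y\<in>ker_poly. y \<noteq> 0)"
proof -
  have "ker_twist \<subseteq> edge_chains E dE"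
    by (auto simp: ker_twist_def ker_d_def)
  moreover have "h1_twist V E tlG hdG dV dE Rt Rh = vector_space.dim chain_scale ker_twist"
    by (simp add: h1_twist_def ker_twist_def)
  ultimately have "h1_twist V E tlG hdG dV dE Rt Rh \<noteq> 0 \<longleftrightarrow> \<not> ker_twist \<subseteq> {0}"
    by (simp add: dim_chains_eq_0_iff[OF finite_E])
  also have "\<dots> \<longleftrightarrow> (\<exists>x\<in>ker_twist. x \<noteq> 0)"
    by blast
  also have "\<dots> \<longleftrightarrow> (\<exists>y\<in>ker_poly. y \<noteq> 0)"
  proof
    assume "\<exists>y\<in>ker_poly. y \<noteq> 0"
    then obtain y where "y \<in> ker_poly" "y \<noteq> 0" by blast
    then have "(\<lambda>e j. fract_of (y e j)) \<in> ker_twist" "(\<lambda>e j. fract_of (y e j)) \<noteq> 0"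
      using fract_of_ker_poly by (auto simp: fun_eq_iff)
    then show "\<exists>x\<in>ker_twist. x \<noteq> 0" by blast
  qed (use ker_poly_of_ker_twist in blast)
  finally show ?thesis .
qed

section \<open>The universal Abelian covering\<close>

abbreviation cov_cycle :: "('e \<times> ('e \<Rightarrow> int) \<Rightarrow> nat \<Rightarrow> 'a) \<Rightarrow> bool" where
  "cov_cycle w \<equiv> is_cycle (cov_V V E) (cov_E E) (cov_tl tlG) (cov_hd hdG)
     (\<lambda>p. dV (fst p)) (\<lambda>p. dE (fst p)) (\<lambda>p. Rt (fst p)) (\<lambda>p. Rh (fst p)) w"

abbreviation H1_cov :: "('e \<times> ('e \<Rightarrow> int) \<Rightarrow> nat \<Rightarrow> 'a) set" where
  "H1_cov \<equiv> H1_oplus_pullback V E tlG hdG dV dE Rt Rh"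

lemma H1_cov_iff:
  "w \<in> H1_cov \<longleftrightarrow> w \<in> edge_chains (cov_E E) (\<lambda>p. dE (fst p)) \<and> cov_cycle w \<and>
     finite {p \<in> cov_E E. \<exists>j. w p j \<noteq> 0}"
  by (auto simp: H1_oplus_pullback_def H1_oplus_def ker_d_def)

lemma ZE_add: "m \<in> ZE E \<Longrightarrow> s \<in> ZE E \<Longrightarrow> m + s \<in> ZE E"
  and ZE_diff: "m \<in> ZE E \<Longrightarrow> s \<in> ZE E \<Longrightarrow> m - s \<in> ZE E"
  and delta_ZE: "e \<in> E \<Longrightarrow> delta e \<in> ZE E"
  by (auto simp: ZE_def delta_def)

text \<open>The defect of the cycle condition of a chain on the cover at the lift (v, m)
  of a vertex v: the edges into (v, m) are the (e, m), the edges out of it the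
  (e, m - delta e).\<close>
definition cov_boundary ::
  "('e \<times> ('e \<Rightarrow> int) \<Rightarrow> nat \<Rightarrow> 'a) \<Rightarrow> 'v \<Rightarrow> ('e \<Rightarrow> int) \<Rightarrow> nat \<Rightarrow> 'a" where
  "cov_boundary w v m i =
     (\<Sum>e\<in>{e\<in>E. hdG e = v}. \<Sum>j<dE e. Rh e i j * w (e, m) j)
   - (\<Sum>e\<in>{e\<in>E. tlG e = v}. \<Sum>j<dE e. Rt e i j * w (e, m - delta e) j)"

lemma cov_cycle_iff:
  "cov_cycle w \<longleftrightarrow> (\<forall>v\<in>V. \<forall>m\<in>ZE E. \<forall>i<dV v. cov_boundary w v m i = 0)"
proof -
  have hd_fibre: "{p \<in> cov_E E. cov_hd hdG p = (v, m)} = (\<lambda>e. (e, m)) ` {e\<in>E. hdG e = v}"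
    if "m \<in> ZE E" for v m
    using that by (auto simp: cov_E_def cov_hd_def)
  have tl_fibre: "{p \<in> cov_E E. cov_tl tlG p = (v, m)} =
      (\<lambda>e. (e, m - delta e)) ` {e\<in>E. tlG e = v}" if "m \<in> ZE E" for v m
    using that ZE_diff[OF that delta_ZE] by (force simp: cov_E_def cov_tl_def image_iff)
  have "boundary (cov_E E) (cov_tl tlG) (cov_hd hdG) (\<lambda>p. dE (fst p))
      (\<lambda>p. Rt (fst p)) (\<lambda>p. Rh (fst p)) w (v, m) i = cov_boundary w v m i"
    if "m \<in> ZE E" for v m i
    unfolding boundary_def cov_boundary_def hd_fibre[OF that] tl_fibre[OF that]
    by (subst (1 2) sum.reindex) (auto intro: inj_onI)
  then show ?thesis
    by (auto simp: is_cycle_iff_boundary cov_V_def)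
qed

definition translate ::
  "('e \<Rightarrow> int) \<Rightarrow> ('e \<times> ('e \<Rightarrow> int) \<Rightarrow> nat \<Rightarrow> 'a) \<Rightarrow> 'e \<times> ('e \<Rightarrow> int) \<Rightarrow> nat \<Rightarrow> 'a" where
  "translate s w = (\<lambda>(e, n). w (e, n - s))"

lemma translate_H1_cov:
  assumes s: "s \<in> ZE E" and w: "w \<in> H1_cov"
  shows "translate s w \<in> H1_cov"
proof -
  have "n \<in> ZE E" if "n - s \<in> ZE E" for n
    using ZE_add[OF that s] by simp
  then have "translate s w \<in> edge_chains (cov_E E) (\<lambda>p. dE (fst p))"
    using w by (auto simp: H1_cov_iff edge_chains_def translate_def cov_E_def)
  moreover have "cov_cycle (translate s w)"
  proof -
    have "cov_boundary (translate s w) v m i = cov_boundary w v (m - s) i" for v m i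
      by (simp add: cov_boundary_def translate_def diff_right_commute)
    then show ?thesis
      using w ZE_diff[OF _ s] by (simp add: H1_cov_iff cov_cycle_iff)
  qed
  moreover have "finite {p \<in> cov_E E. \<exists>j. translate s w p j \<noteq> 0}"
  proof (rule finite_subset)
    show "{p \<in> cov_E E. \<exists>j. translate s w p j \<noteq> 0} \<subseteq>
        (\<lambda>(e, n). (e, n + s)) ` {p \<in> cov_E E. \<exists>j. w p j \<noteq> 0}"
      using ZE_diff[OF _ s] by (force simp: translate_def cov_E_def image_iff)
    show "finite ((\<lambda>(e, n). (e, n + s)) ` {p \<in> cov_E E. \<exists>j. w p j \<noteq> 0})"
      using w by (simp add: H1_cov_iff)
  qed
  ultimately show ?thesis
    by (simp add: H1_cov_iff)
qed

definition supported_nonneg :: "('e \<times> ('e \<Rightarrow> int) \<Rightarrow> nat \<Rightarrow> 'a) \<Rightarrow> bool" where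
  "supported_nonneg w \<longleftrightarrow> (\<forall>e n j. w (e, n) j \<noteq> 0 \<longrightarrow> (\<forall>e'. 0 \<le> n e'))"

lemma translate_into_orthant:
  assumes w: "w \<in> H1_cov"
  obtains s where "s \<in> ZE E" and "supported_nonneg (translate s w)"
proof -
  define S where "S = {p \<in> cov_E E. \<exists>j. w p j \<noteq> 0}"
  have "finite S"
    using w by (simp add: H1_cov_iff S_def)
  define s where "s e' = (if e' \<in> E then (\<Sum>p\<in>S. \<bar>snd p e'\<bar>) else 0)" for e'
  have "s \<in> ZE E"
    by (simp add: s_def ZE_def)
  have "0 \<le> n e'" if "w (e, n - s) j \<noteq> 0" for e n j e'
  proof -
    have "(e, n - s) \<in> S"
      using that w by (auto simp: S_def H1_cov_iff edge_chains_def)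
    show ?thesis
    proof (cases "e' \<in> E")
      case True
      have "\<bar>(n - s) e'\<bar> \<le> (\<Sum>p\<in>S. \<bar>snd p e'\<bar>)"
        using member_le_sum[OF \<open>(e, n - s) \<in> S\<close>, of "\<lambda>p. \<bar>snd p e'\<bar>"] \<open>finite S\<close> by simp
      then show ?thesis
        using True by (simp add: s_def)
    next
      case False
      then show ?thesis
        using \<open>(e, n - s) \<in> S\<close> by (simp add: S_def s_def cov_E_def ZE_def)
    qed
  qed
  then have "supported_nonneg (translate s w)"
    by (auto simp: supported_nonneg_def translate_def)
  with \<open>s \<in> ZE E\<close> show ?thesis
    by (rule that)
qed

lemma translate_eq_0_iff: "translate s w = 0 \<longleftrightarrow> w = 0"
proof
  assume "translate s w = 0"
  then have "translate s w (e, n + s) j = 0" for e n j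
    by simp
  then have "w (e, n) j = 0" for e n j
    by (simp add: translate_def)
  then show "w = 0"
    by (auto simp: fun_eq_iff)
qed (simp add: translate_def fun_eq_iff)

text \<open>A monomial M in the variables psi(e) splits as the part of M in variables
  outside E times the monomial psi^n for the lattice point n = expo M in Z^E.\<close>
definition psi_pow :: "('e \<Rightarrow> int) \<Rightarrow> 'e \<Rightarrow>\<^sub>0 nat" where
  "psi_pow n = Abs_poly_mapping (\<lambda>e. if e \<in> E then nat (n e) else 0)"

definition expo :: "('e \<Rightarrow>\<^sub>0 nat) \<Rightarrow> 'e \<Rightarrow> int" where
  "expo M = (\<lambda>e. if e \<in> E then int (lookup M e) else 0)"

definition off_E :: "('e \<Rightarrow>\<^sub>0 nat) \<Rightarrow> 'e \<Rightarrow>\<^sub>0 nat" where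
  "off_E M = Abs_poly_mapping (\<lambda>e. if e \<in> E then 0 else lookup M e)"

lemma lookup_psi_pow: "lookup (psi_pow n) e = (if e \<in> E then nat (n e) else 0)"
proof -
  have "finite {e. (if e \<in> E then nat (n e) else 0) \<noteq> 0}"
    by (rule finite_subset[OF _ finite_E]) auto
  then show ?thesis
    by (simp add: psi_pow_def)
qed

lemma lookup_off_E: "lookup (off_E M) e = (if e \<in> E then 0 else lookup M e)"
proof -
  have "finite {e. (if e \<in> E then 0 else lookup M e) \<noteq> 0}"
    by (rule finite_subset[of _ "keys M"]) (auto simp: in_keys_iff)
  then show ?thesis
    by (simp add: off_E_def)
qed

lemma keys_off_E: "keys (off_E M) \<inter> E = {}"
  by (auto simp: in_keys_iff lookup_off_E)

lemma off_E_plus_psi_pow_expo: "off_E M + psi_pow (expo M) = M"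
  by (rule poly_mapping_eqI) (simp add: lookup_add lookup_off_E lookup_psi_pow expo_def)

lemma expo_ZE: "expo M \<in> ZE E" and expo_nonneg: "0 \<le> expo M e"
  by (auto simp: expo_def ZE_def)

lemma lookup_plus_psi_pow:
  "keys B \<inter> E = {} \<Longrightarrow> lookup (B + psi_pow n) e = (if e \<in> E then nat (n e) else lookup B e)"
  by (auto simp: lookup_add lookup_psi_pow in_keys_iff)

lemma expo_plus_psi_pow:
  assumes "keys B \<inter> E = {}" and "n \<in> ZE E" and "\<forall>e'. 0 \<le> n e'"
  shows "expo (B + psi_pow n) = n"
  using assms by (auto simp: expo_def lookup_plus_psi_pow ZE_def fun_eq_iff)

lemma off_E_eq_0: "keys M \<subseteq> E \<Longrightarrow> off_E M = 0"
  by (rule poly_mapping_eqI) (auto simp: lookup_off_E in_keys_iff)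

lemma keys_plus_psi_pow_subset_iff:
  assumes "keys B \<inter> E = {}"
  shows "keys (B + psi_pow n) \<subseteq> E \<longleftrightarrow> B = 0"
proof
  assume "keys (B + psi_pow n) \<subseteq> E"
  then have "e \<notin> keys (B + psi_pow n)" if "e \<notin> E" for e
    using that by blast
  then have "lookup B e = 0" if "e \<notin> E" for e
    using that lookup_plus_psi_pow[OF assms, of n e] by (simp add: in_keys_iff)
  then have "lookup B e = 0" for e
    using assms by (cases "e \<in> E") (auto simp: in_keys_iff)
  then show "B = 0"
    by (simp add: poly_mapping_eqI)
qed (auto simp: in_keys_iff lookup_psi_pow split: if_splits)

lemma plus_psi_pow_minus_single:
  assumes "keys B \<inter> E = {}" and "e \<in> E" and "1 \<le> n e"
  shows "B + psi_pow n - single e 1 = B + psi_pow (n - delta e)"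
proof (rule poly_mapping_eqI)
  fix k
  have "nat (n e - 1) = nat (n e) - 1"
    using assms(3) by linarith
  then show "lookup (B + psi_pow n - single e 1) k = lookup (B + psi_pow (n - delta e)) k"
    using assms by (auto simp: lookup_minus lookup_plus_psi_pow lookup_single delta_def when_def)
qed

section \<open>Slices of polynomial chains\<close>

text \<open>The coefficients of a polynomial chain y at the monomials B psi^n, n ranging
  over the positive orthant, form a chain on the cover: its slice at B.\<close>
definition slice ::
  "('e \<Rightarrow>\<^sub>0 nat) \<Rightarrow> ('e \<Rightarrow> nat \<Rightarrow> ('e \<Rightarrow>\<^sub>0 nat) \<Rightarrow>\<^sub>0 'a) \<Rightarrow> 'e \<times> ('e \<Rightarrow> int) \<Rightarrow> nat \<Rightarrow> 'a" where
  "slice B y = (\<lambda>(e, n) j. if n \<in> ZE E \<and> (\<forall>e'. 0 \<le> n e') then lookup (y e j) (B + psi_pow n) else 0)"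

text \<open>Coefficients of the polynomial boundary: multiplication by psi(e) shifts
  coefficients by one in the exponent of psi(e).\<close>
lemma lookup_poly_boundary:
  "lookup (boundary E tlG hdG dE poly_Rt poly_Rh y v i) M =
     (\<Sum>e\<in>{e\<in>E. hdG e = v}. \<Sum>j<dE e. Rh e i j * lookup (y e j) M)
   - (\<Sum>e\<in>{e\<in>E. tlG e = v}. \<Sum>j<dE e.
        Rt e i j * (if 1 \<le> lookup M e then lookup (y e j) (M - single e 1) else 0))"
proof -
  have "lookup (poly_Rh e i j * p) M = Rh e i j * lookup p M" for e j p
    by (simp add: poly_Rh_def lookup_monomial_mult)
  moreover have "lookup (poly_Rt e i j * p) M =
      Rt e i j * (if 1 \<le> lookup M e then lookup p (M - single e 1) else 0)" for e j p
  proof -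
    have "(\<forall>k. lookup (single e (1::nat)) k \<le> lookup M k) \<longleftrightarrow> 1 \<le> lookup M e"
      by (auto simp: lookup_single when_def)
    then show ?thesis
      by (simp add: poly_Rt_def lookup_monomial_mult)
  qed
  ultimately show ?thesis
    by (simp add: boundary_def lookup_minus lookup_sum)
qed

lemma cov_boundary_slice:
  assumes B: "keys B \<inter> E = {}" and n: "n \<in> ZE E"
  shows "cov_boundary (slice B y) v n i =
    (if \<forall>e'. 0 \<le> n e' then lookup (boundary E tlG hdG dE poly_Rt poly_Rh y v i) (B + psi_pow n) else 0)"
proof (cases "\<forall>e'. 0 \<le> n e'")
  case True
  have "slice B y (e, n - delta e) j =
      (if 1 \<le> lookup (B + psi_pow n) e then lookup (y e j) (B + psi_pow n - single e 1) else 0)"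
    if "e \<in> E" for e j
  proof (cases "1 \<le> n e")
    case True
    then have "\<forall>e'. 0 \<le> (n - delta e) e'"
      using \<open>\<forall>e'. 0 \<le> n e'\<close> by (auto simp: delta_def)
    then have "slice B y (e, n - delta e) j = lookup (y e j) (B + psi_pow (n - delta e))"
      using ZE_diff[OF n delta_ZE[OF that]] by (simp add: slice_def)
    also have "\<dots> = lookup (y e j) (B + psi_pow n - single e 1)"
      by (simp only: plus_psi_pow_minus_single[of B e n, OF B that True])
    finally have "slice B y (e, n - delta e) j = lookup (y e j) (B + psi_pow n - single e 1)" .
    moreover have "1 \<le> lookup (B + psi_pow n) e"
      using True that B by (simp add: lookup_plus_psi_pow)
    ultimately show ?thesis
      by simp
  next
    case False
    then show ?thesis
      using that B by (auto simp: slice_def lookup_plus_psi_pow delta_def)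
  qed
  then show ?thesis
    using True n by (simp add: cov_boundary_def lookup_poly_boundary slice_def)
next
  case False
  then obtain e' where "n e' < 0"
    by (auto simp: not_le)
  moreover have "(n - delta e) e' < 0" for e
    using \<open>n e' < 0\<close> by (auto simp: delta_def)
  ultimately have "\<not> (\<forall>e'. 0 \<le> n e')" "\<not> (\<forall>e'. 0 \<le> (n - delta e) e')" for e
    by (metis not_le)+
  then have "slice B y (e, n) j = 0" "slice B y (e, n - delta e) j = 0" for e j
    by (auto simp: slice_def)
  then show ?thesis
    using False by (auto simp: cov_boundary_def)
qed

text \<open>A polynomial chain is a cycle exactly when all its slices are cycles on the
  cover, since every monomial is B psi^n for a unique B off E and n \<ge> 0.\<close>
lemma poly_cycle_iff_slices:
  "is_cycle V E tlG hdG dV dE poly_Rt poly_Rh y \<longleftrightarrow>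
     (\<forall>B. keys B \<inter> E = {} \<longrightarrow> cov_cycle (slice B y))"
proof
  assume cycle: "is_cycle V E tlG hdG dV dE poly_Rt poly_Rh y"
  show "\<forall>B. keys B \<inter> E = {} \<longrightarrow> cov_cycle (slice B y)"
  proof (intro allI impI)
    fix B :: "'e \<Rightarrow>\<^sub>0 nat"
    assume "keys B \<inter> E = {}"
    then show "cov_cycle (slice B y)"
      unfolding cov_cycle_iff using cycle by (simp add: is_cycle_iff_boundary cov_boundary_slice)
  qed
next
  assume slices: "\<forall>B. keys B \<inter> E = {} \<longrightarrow> cov_cycle (slice B y)"
  have "lookup (boundary E tlG hdG dE poly_Rt poly_Rh y v i) M = 0"
    if "v \<in> V" "i < dV v" for v i M
  proof -
    have "cov_boundary (slice (off_E M) y) v (expo M) i = 0"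
      using slices keys_off_E expo_ZE that by (simp add: cov_cycle_iff)
    then show ?thesis
      by (simp add: cov_boundary_slice keys_off_E expo_ZE expo_nonneg off_E_plus_psi_pow_expo)
  qed
  then show "is_cycle V E tlG hdG dV dE poly_Rt poly_Rh y"
    by (auto simp: is_cycle_iff_boundary intro: poly_mapping_eqI)
qed

lemma slice_H1_cov:
  assumes y: "y \<in> ker_poly" and B: "keys B \<inter> E = {}"
  shows "slice B y \<in> H1_cov"
proof -
  have y_chain: "y e j = 0" if "e \<notin> E \<or> dE e \<le> j" for e j
    using y that by (auto simp: ker_poly_def ker_d_def edge_chains_def)
  have "slice B y \<in> edge_chains (cov_E E) (\<lambda>p. dE (fst p))"
    by (auto simp: edge_chains_def slice_def cov_E_def y_chain)
  moreover have "cov_cycle (slice B y)"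
    using y B poly_cycle_iff_slices by (simp add: ker_poly_def ker_d_def)
  moreover have "finite {p \<in> cov_E E. \<exists>j. slice B y p j \<noteq> 0}"
  proof (rule finite_subset)
    show "{p \<in> cov_E E. \<exists>j. slice B y p j \<noteq> 0} \<subseteq>
        Sigma E (\<lambda>e. expo ` (\<Union>j<dE e. keys (y e j)))"
    proof
      fix p
      assume "p \<in> {p \<in> cov_E E. \<exists>j. slice B y p j \<noteq> 0}"
      then obtain e n j where p: "p = (e, n)" "(e, n) \<in> cov_E E" "slice B y (e, n) j \<noteq> 0"
        by (cases p) auto
      then have "e \<in> E" "n \<in> ZE E" "\<forall>e'. 0 \<le> n e'" "B + psi_pow n \<in> keys (y e j)"
        by (auto simp: cov_E_def slice_def in_keys_iff split: if_splits)
      moreover have "j < dE e"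
        using \<open>B + psi_pow n \<in> keys (y e j)\<close> y_chain by (metis keys_zero empty_iff not_le)
      moreover have "n = expo (B + psi_pow n)"
        using expo_plus_psi_pow[OF B] \<open>n \<in> ZE E\<close> \<open>\<forall>e'. 0 \<le> n e'\<close> by simp
      ultimately show "p \<in> Sigma E (\<lambda>e. expo ` (\<Union>j<dE e. keys (y e j)))"
        using p(1) by blast
    qed
    show "finite (Sigma E (\<lambda>e. expo ` (\<Union>j<dE e. keys (y e j))))"
      using finite_E by simp
  qed
  ultimately show ?thesis
    by (simp add: H1_cov_iff)
qed

lemma supported_nonneg_slice: "supported_nonneg (slice B y)"
  by (simp add: supported_nonneg_def slice_def)

lemma slice_nonzero:
  assumes "y \<noteq> 0"
  obtains B where "keys B \<inter> E = {}" and "slice B y \<noteq> 0"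
proof -
  obtain e j M where "lookup (y e j) M \<noteq> 0"
    using assms by (auto simp: fun_eq_iff poly_mapping_eq_iff)
  then have "slice (off_E M) y (e, expo M) j \<noteq> 0"
    by (simp add: slice_def expo_ZE expo_nonneg off_E_plus_psi_pow_expo)
  then show ?thesis
    using keys_off_E that by (metis zero_fun_def)
qed

section \<open>Generating functions of chains on the cover\<close>

definition genfun :: "('e \<times> ('e \<Rightarrow> int) \<Rightarrow> nat \<Rightarrow> 'a) \<Rightarrow> 'e \<Rightarrow> nat \<Rightarrow> ('e \<Rightarrow>\<^sub>0 nat) \<Rightarrow>\<^sub>0 'a" where
  "genfun w e j = Abs_poly_mapping (\<lambda>M. if keys M \<subseteq> E then w (e, expo M) j else 0)"

lemma lookup_genfun:
  assumes w: "w \<in> H1_cov"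
  shows "lookup (genfun w e j) M = (if keys M \<subseteq> E then w (e, expo M) j else 0)"
proof -
  have "{M. (if keys M \<subseteq> E then w (e, expo M) j else 0) \<noteq> 0} \<subseteq>
      psi_pow ` snd ` {p \<in> cov_E E. \<exists>j. w p j \<noteq> 0}"
  proof
    fix M
    assume "M \<in> {M. (if keys M \<subseteq> E then w (e, expo M) j else 0) \<noteq> 0}"
    then have M: "(if keys M \<subseteq> E then w (e, expo M) j else 0) \<noteq> 0"
      by simp
    then have "(e, expo M) \<in> cov_E E"
      using w by (auto simp: H1_cov_iff edge_chains_def split: if_splits)
    moreover have "M = psi_pow (expo M)"
      using M off_E_plus_psi_pow_expo[of M] off_E_eq_0[of M] by (simp split: if_splits)
    ultimately show "M \<in> psi_pow ` snd ` {p \<in> cov_E E. \<exists>j. w p j \<noteq> 0}"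
      using M by (force split: if_splits)
  qed
  moreover have "finite (psi_pow ` snd ` {p \<in> cov_E E. \<exists>j. w p j \<noteq> 0})"
    using w by (simp add: H1_cov_iff)
  ultimately have "finite {M. (if keys M \<subseteq> E then w (e, expo M) j else 0) \<noteq> 0}"
    by (rule finite_subset)
  then show ?thesis
    by (simp add: genfun_def)
qed

lemma slice_genfun:
  assumes w: "w \<in> H1_cov" and w_nonneg: "supported_nonneg w" and B: "keys B \<inter> E = {}"
  shows "slice B (genfun w) = (if B = 0 then w else 0)"
proof (intro ext)
  fix p :: "'e \<times> ('e \<Rightarrow> int)" and j :: nat
  obtain e n where p: "p = (e, n)"
    by fastforce
  show "slice B (genfun w) p j = (if B = 0 then w else 0) p j"
  proof (cases "n \<in> ZE E \<and> (\<forall>e'. 0 \<le> n e')")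
    case True
    then show ?thesis
      using B expo_plus_psi_pow[of 0] keys_plus_psi_pow_subset_iff
      by (simp add: p slice_def lookup_genfun[OF w])
  next
    case False
    then have "w (e, n) j = 0"
      using w w_nonneg by (auto simp: H1_cov_iff edge_chains_def cov_E_def supported_nonneg_def)
    then show ?thesis
      using False by (auto simp: p slice_def)
  qed
qed

lemma genfun_ker_poly:
  assumes w: "w \<in> H1_cov" and w_nonneg: "supported_nonneg w"
  shows "genfun w \<in> ker_poly"
proof -
  have "genfun w e j = 0" if "e \<notin> E \<or> dE e \<le> j" for e j
    using w that
    by (intro poly_mapping_eqI) (auto simp: lookup_genfun H1_cov_iff edge_chains_def cov_E_def)
  then have "genfun w \<in> edge_chains E dE"
    by (simp add: edge_chains_def)
  moreover have "cov_cycle (slice B (genfun w))" if "keys B \<inter> E = {}" for B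
  proof -
    have "cov_cycle 0"
      by (simp add: cov_cycle_iff cov_boundary_def)
    then show ?thesis
      using w by (simp add: slice_genfun[OF w w_nonneg that] H1_cov_iff)
  qed
  ultimately show ?thesis
    by (simp add: ker_poly_def ker_d_def poly_cycle_iff_slices)
qed

lemma genfun_nonzero:
  assumes w: "w \<in> H1_cov" and w_nonneg: "supported_nonneg w" and "w \<noteq> 0"
  shows "genfun w \<noteq> 0"
proof
  assume "genfun w = 0"
  then have "slice 0 (genfun w) = 0"
    by (simp add: slice_def fun_eq_iff)
  then show False
    using slice_genfun[OF w w_nonneg, of 0] \<open>w \<noteq> 0\<close> by simp
qed

theorem h1_twist_iff_H1_cov:
  "(h1_twist V E tlG hdG dV dE Rt Rh \<noteq> 0 \<longleftrightarrow> H1_cov \<noteq> {0}) \<and>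
   (h1_twist V E tlG hdG dV dE Rt Rh \<noteq> 0 \<longrightarrow> (\<exists>w\<in>H1_cov. w \<noteq> 0 \<and> supported_nonneg w))"
proof -
  have to_cover: "\<exists>w\<in>H1_cov. w \<noteq> 0 \<and> supported_nonneg w"
    if h1: "h1_twist V E tlG hdG dV dE Rt Rh \<noteq> 0"
  proof -
    obtain y where "y \<in> ker_poly" "y \<noteq> 0"
      using h1 h1_twist_ne_0_iff by blast
    moreover obtain B where "keys B \<inter> E = {}" "slice B y \<noteq> 0"
      using slice_nonzero[OF \<open>y \<noteq> 0\<close>] by blast
    ultimately show ?thesis
      using slice_H1_cov supported_nonneg_slice by blast
  qed
  have from_cover: "h1_twist V E tlG hdG dV dE Rt Rh \<noteq> 0" if w: "w \<in> H1_cov" "w \<noteq> 0" for w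
  proof -
    obtain s where "s \<in> ZE E" "supported_nonneg (translate s w)"
      using translate_into_orthant[OF \<open>w \<in> H1_cov\<close>] by blast
    moreover have "translate s w \<in> H1_cov" "translate s w \<noteq> 0"
      using translate_H1_cov[OF \<open>s \<in> ZE E\<close> w(1)] w(2) translate_eq_0_iff by auto
    ultimately show ?thesis
      using genfun_ker_poly genfun_nonzero h1_twist_ne_0_iff by blast
  qed
  have "0 \<in> H1_cov"
    by (simp add: H1_cov_iff edge_chains_def cov_cycle_iff cov_boundary_def)
  then show ?thesis
    using to_cover from_cover by blast
qed

end

theorem lemma1:
  fixes V :: "'v set" and E :: "'e::linorder set" and tlG hdG :: "'e \<Rightarrow> 'v"
    and dV :: "'v \<Rightarrow> nat" and dE :: "'e \<Rightarrow> nat"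
    and Rt Rh :: "'e \<Rightarrow> nat \<Rightarrow> nat \<Rightarrow> 'a::field"
  assumes "finite V" and "finite E" and "tlG ` E \<subseteq> V" and "hdG ` E \<subseteq> V"
  shows "(h1_twist V E tlG hdG dV dE Rt Rh \<noteq> 0 \<longleftrightarrow>
           H1_oplus_pullback V E tlG hdG dV dE Rt Rh \<noteq> {0}) \<and>
         (h1_twist V E tlG hdG dV dE Rt Rh \<noteq> 0 \<longrightarrow>
           (\<exists>w \<in> H1_oplus_pullback V E tlG hdG dV dE Rt Rh. w \<noteq> 0 \<and>
              (\<forall>e n j. w (e, n) j \<noteq> 0 \<longrightarrow> (\<forall>e'. 0 \<le> n e'))))"
proof -
  interpret digraph_sheaf V E tlG hdG dV dE Rt Rh
    using \<open>finite E\<close> by unfold_locales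
  show ?thesis
    using h1_twist_iff_H1_cov by (simp add: supported_nonneg_def)
qed

end
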